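(* Let $(C,\mathbf A)$, $C\in\mathcal L(\mathcal X,\mathcal Y)$, $\mathbf A=(A_1,\dots,A_d)\in\mathcal L(\mathcal X)^d$, be a contractive pair and let $Q$ be the orthogonal projection of $\mathcal X$ onto $(\operatorname{Ker}\widehat{\mathcal O}_{C,\mathbf A})^\perp$. Then $Q-A_1^*QA_1-\cdots-A_d^*QA_d\ge C^*C$ and $\mathcal G_{C,\mathbf A}\le Q\le I_{\mathcal X}$. Write, with respect to $\mathcal X=\operatorname{Ker}\widehat{\mathcal O}_{C,\mathbf A}\oplus(\operatorname{Ker}\widehat{\mathcal O}_{C,\mathbf A})^\perp$, $$C=\begin{bmatrix}0&C^0\end{bmatrix},\quad A_j=\begin{bmatrix}A_{j1}&A_{j2}\\0&A_j^0\end{bmatrix},\quad Q=\begin{bmatrix}0&0\\0&I\end{bmatrix}\quad(j=1,\dots,d).$$ Then $Q$ satisfies the Stein equation $Q-\sum_{j=1}^dA_j^*QA_j=C^*C$ if and only if $(C^0,\mathbf A^0)=(C^0,(A_1^0,\dots,A_d^0))$ is an isometric pair, in which case also $A_{j2}=0$ (so $(\operatorname{Ker}\widehat{\mathcal O}_{C,\mathbf A})^\perp$ is invariant for $A_j$) for $j=1,\dots,d$.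
   Context: $\mathcal F_d$: free semigroup of words on $\{1,\dots,d\}$; $\mathbf A^v=A_{i_N}\cdots A_{i_1}$ for $v=i_N\cdots i_1$; $\widehat{\mathcal O}_{C,\mathbf A}x=\sum_v(C\mathbf A^vx)z^v\in H^2_{\mathcal Y}(\mathcal F_d)$ (formal power series in noncommuting indeterminates with square-summable coefficients); $\mathcal G_{C,\mathbf A}=\widehat{\mathcal O}_{C,\mathbf A}^*\widehat{\mathcal O}_{C,\mathbf A}=\sum_v(\mathbf A^v)^*C^*C\mathbf A^v$. Contractive pair: $C^*C+\sum_jA_j^*A_j\le I$; isometric pair: equality. *)

theory Defs
  imports "HOL-Analysis.Analysis"
begin

text \<open>Operators are bounded linear maps between real Hilbert spaces
  (types of class real_inner + complete_space).  A d-tuple of operators is a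
  function A :: nat => ('a => 'a) used on the indices 1..d.\<close>

text \<open>Words of the free semigroup F_d: lists over {1..d}.  The list
  [i_N, ..., i_1] denotes the word v = i_N ... i_1, and
  A^v = A_{i_N} ... A_{i_1}; the empty word gives the identity.\<close>

definition words :: "nat \<Rightarrow> nat list set" where
  "words d = {v. set v \<subseteq> {1..d}}"

fun word_pow :: "(nat \<Rightarrow> 'a \<Rightarrow> 'a) \<Rightarrow> nat list \<Rightarrow> 'a \<Rightarrow> 'a" where
  "word_pow A [] = id"
| "word_pow A (i # v) = A i \<circ> word_pow A v"

definition adjoint_on :: "'a::real_inner set \<Rightarrow> ('a \<Rightarrow> 'b::real_inner) \<Rightarrow> 'b \<Rightarrow> 'a" where
  "adjoint_on M T y = (THE z. z \<in> M \<and> (\<forall>x\<in>M. inner (T x) y = inner x z))"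

definition adjoint :: "('a::real_inner \<Rightarrow> 'b::real_inner) \<Rightarrow> 'b \<Rightarrow> 'a" where
  "adjoint T = adjoint_on UNIV T"

definition op_le :: "('a::real_inner \<Rightarrow> 'a) \<Rightarrow> ('a \<Rightarrow> 'a) \<Rightarrow> bool" where
  "op_le S T \<longleftrightarrow> (\<forall>x. inner (S x) x \<le> inner (T x) x)"

definition contractive_pair ::
  "('a::{real_inner,complete_space} \<Rightarrow> 'b::{real_inner,complete_space}) \<Rightarrow> (nat \<Rightarrow> 'a \<Rightarrow> 'a) \<Rightarrow> nat \<Rightarrow> bool" where
  "contractive_pair C A d \<longleftrightarrow> bounded_linear C \<and> (\<forall>j\<in>{1..d}. bounded_linear (A j)) \<and>
     op_le (\<lambda>x. adjoint C (C x) + (\<Sum>j=1..d. adjoint (A j) (A j x))) id"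

text \<open>Isometric pair of operators C : M -> Y, A_j : M -> M on a closed
  subspace M of X (regarded as a Hilbert space in its own right):
  C^*C + sum A_j^*A_j = I_M, the adjoints being taken in M.\<close>

definition isometric_pair_on ::
  "'a::{real_inner,complete_space} set \<Rightarrow> ('a \<Rightarrow> 'b::{real_inner,complete_space}) \<Rightarrow> (nat \<Rightarrow> 'a \<Rightarrow> 'a) \<Rightarrow> nat \<Rightarrow> bool" where
  "isometric_pair_on M C A d \<longleftrightarrow>
     (\<forall>j\<in>{1..d}. \<forall>x\<in>M. A j x \<in> M) \<and>
     (\<forall>x\<in>M. adjoint_on M C (C x) + (\<Sum>j=1..d. adjoint_on M (A j) (A j x)) = x)"

text \<open>Observability operator: x |-> sum_v (C A^v x) z^v, represented by its
  coefficient family indexed by words (0 outside the words over {1..d}).\<close>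

definition obs_op :: "('a \<Rightarrow> 'b::zero) \<Rightarrow> (nat \<Rightarrow> 'a \<Rightarrow> 'a) \<Rightarrow> nat \<Rightarrow> 'a \<Rightarrow> nat list \<Rightarrow> 'b" where
  "obs_op C A d x = (\<lambda>v. if v \<in> words d then C (word_pow A v x) else 0)"

definition obs_kernel :: "('a \<Rightarrow> 'b::zero) \<Rightarrow> (nat \<Rightarrow> 'a \<Rightarrow> 'a) \<Rightarrow> nat \<Rightarrow> 'a set" where
  "obs_kernel C A d = {x. obs_op C A d x = (\<lambda>v. 0)}"

definition gramian ::
  "('a::{real_inner,complete_space} \<Rightarrow> 'b::{real_inner,complete_space}) \<Rightarrow> (nat \<Rightarrow> 'a \<Rightarrow> 'a) \<Rightarrow> nat \<Rightarrow> 'a \<Rightarrow> 'a" where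
  "gramian C A d x = (\<Sum>\<^sub>\<infinity>v\<in>words d. adjoint (word_pow A v) (adjoint C (C (word_pow A v x))))"

definition orth_proj :: "'a::real_inner set \<Rightarrow> ('a \<Rightarrow> 'a) \<Rightarrow> bool" where
  "orth_proj M P \<longleftrightarrow> (\<forall>x. P x \<in> M \<and> (\<forall>m\<in>M. inner (x - P x) m = 0))"

end

(*
  The observability kernel K is annihilated by C and invariant under every A_j, since
  C A^v (A_j k) = C A^(v j) k.  Hence C = C Q and Q A_j = Q A_j Q for the projection Q onto
  the orthogonal complement of K, and contractivity applied to Q x gives the one-step bound
  |C x|^2 + sum_j |Q A_j x|^2 <= |Q x|^2.  This is the Stein inequality, and iterating it
  over words bounds every finite partial sum of the gramian by |Q x|^2.  The defect
  Q - sum_j A_j^* Q A_j - C^* C has the form (x, y) |-> b (Q x) (Q y), and b vanishes on the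
  complement exactly when (C, Q A_j) is an isometric pair there.  In that case the one-step
  bound is an equality on the complement, and comparing it with contractivity forces
  |Q A_j m| = |A_j m|, i.e. A_j m stays in the complement.
*)
theory Submission
  imports Defs
begin

section \<open>Orthogonal projections in real Hilbert spaces\<close>

lemma parallelogram_law:
  fixes x y :: "'a::real_inner"
  shows "norm (x + y)^2 + norm (x - y)^2 = 2 * norm x ^ 2 + 2 * norm y ^ 2"
  by (simp add: power2_norm_eq_inner inner_simps algebra_simps)

lemma coeff_eq_0_if_quadratic_nonneg:
  fixes b c :: real
  assumes nonneg: "\<And>t. 0 \<le> c * t^2 - 2 * b * t" and "c \<ge> 0"
  shows "b = 0"
proof -
  have c1: "c + 1 > 0" using \<open>c \<ge> 0\<close> by simp
  have "c * (b / (c + 1))^2 - 2 * b * (b / (c + 1)) = - (b^2 * (c + 2)) / (c + 1)^2"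
    using c1 by (simp add: power_divide divide_simps) (simp add: algebra_simps power2_eq_square)
  with nonneg[of "b / (c + 1)"] have "b^2 * (c + 2) / (c + 1)^2 \<le> 0" by simp
  hence "b^2 * (c + 2) \<le> 0" using c1 by (simp add: divide_le_0_iff)
  with \<open>c \<ge> 0\<close> have "b^2 \<le> 0" by (simp add: mult_le_0_iff)
  thus ?thesis by simp
qed

lemma Cauchy_minimizing_sequence:
  fixes a :: "'a::real_inner"
  assumes "convex N" and nN: "\<And>k. n k \<in> N"
    and low: "\<And>m. m \<in> N \<Longrightarrow> \<delta> \<le> norm (a - m)^2"
    and approx: "\<And>k. norm (a - n k)^2 < \<delta> + 1 / Suc k"
  shows "Cauchy n"
proof (rule metric_CauchyI)
  have bound: "norm (n k - n l)^2 \<le> 2 / Suc k + 2 / Suc l" for k l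
  proof -
    define mid where "mid = (1/2) *\<^sub>R n k + (1/2) *\<^sub>R n l"
    have "mid \<in> N" using \<open>convex N\<close> nN by (simp add: mid_def convexD)
    have "(a - n k) + (a - n l) = 2 *\<^sub>R (a - mid)"
      by (simp add: mid_def algebra_simps scaleR_2)
    hence "norm ((a - n k) + (a - n l))^2 = 4 * norm (a - mid)^2"
      by (simp add: power_mult_distrib)
    hence "4 * \<delta> \<le> norm ((a - n k) + (a - n l))^2" using low[OF \<open>mid \<in> N\<close>] by simp
    moreover have "norm ((a - n k) + (a - n l))^2 + norm (n k - n l)^2
        = 2 * norm (a - n k)^2 + 2 * norm (a - n l)^2"
      using parallelogram_law[of "a - n k" "a - n l"] by (simp add: norm_minus_commute)
    ultimately show ?thesis using approx[of k] approx[of l] by linarith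
  qed
  fix e :: real assume "e > 0"
  obtain K where K: "4 / e^2 < real K" using reals_Archimedean2 by blast
  have "4 < e^2 * real K" using K \<open>e > 0\<close> by (simp add: field_simps)
  also have "\<dots> \<le> e^2 * Suc K" by (simp add: mult_left_mono)
  finally have "4 / Suc K < e^2" by (simp add: field_simps)
  show "\<exists>K. \<forall>k\<ge>K. \<forall>l\<ge>K. dist (n k) (n l) < e"
  proof (intro exI allI impI)
    fix k l assume "K \<le> k" "K \<le> l"
    hence "2 / Suc k \<le> 2 / Suc K" "2 / Suc l \<le> 2 / Suc K" by (simp_all add: frac_le)
    hence "norm (n k - n l)^2 < e^2" using bound[of k l] \<open>4 / Suc K < e^2\<close> by linarith
    thus "dist (n k) (n l) < e" using \<open>e > 0\<close> by (simp add: dist_norm power_less_imp_less_base)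
  qed
qed

lemma closed_convex_nearest_point:
  fixes a :: "'a::{real_inner,complete_space}"
  assumes "closed N" "convex N" "N \<noteq> {}"
  obtains p where "p \<in> N" "\<And>m. m \<in> N \<Longrightarrow> norm (a - p) \<le> norm (a - m)"
proof -
  define \<delta> where "\<delta> = (INF m\<in>N. norm (a - m)^2)"
  have bdd: "bdd_below ((\<lambda>m. norm (a - m)^2) ` N)" by (rule bdd_belowI2[of _ 0]) simp
  have low: "\<delta> \<le> norm (a - m)^2" if "m \<in> N" for m
    unfolding \<delta>_def using bdd that by (rule cINF_lower)
  have "\<exists>m\<in>N. norm (a - m)^2 < \<delta> + 1 / Suc k" for k
    using cINF_less_iff[OF \<open>N \<noteq> {}\<close> bdd, of "\<delta> + 1 / Suc k"] by (simp add: \<delta>_def)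
  then obtain n where nN: "\<And>k. n k \<in> N" and approx: "\<And>k. norm (a - n k)^2 < \<delta> + 1 / Suc k"
    by metis
  have "Cauchy n" using \<open>convex N\<close> nN low approx by (rule Cauchy_minimizing_sequence)
  then obtain p where lim: "n \<longlonglongrightarrow> p" using Cauchy_convergent convergent_def by blast
  have "p \<in> N" using closed_sequentially[OF \<open>closed N\<close> nN lim] .
  have "(\<lambda>k. norm (a - n k)^2) \<longlonglongrightarrow> norm (a - p)^2"
    by (intro tendsto_intros lim)
  moreover have "(\<lambda>k. \<delta> + 1 / Suc k) \<longlonglongrightarrow> \<delta> + 0"
    by (intro tendsto_intros LIMSEQ_inverse_real_of_nat[unfolded inverse_eq_divide])
  ultimately have "norm (a - p)^2 \<le> \<delta>"
    using approx by (intro LIMSEQ_le) (auto intro: less_imp_le)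
  hence "norm (a - p)^2 \<le> norm (a - m)^2" if "m \<in> N" for m using low[OF that] by linarith
  thus ?thesis using \<open>p \<in> N\<close> that by (simp add: power2_le_iff_abs_le)
qed

lemma nearest_point_subspace_orthogonal:
  fixes a :: "'a::real_inner"
  assumes "subspace N" "p \<in> N" and nearest: "\<And>m. m \<in> N \<Longrightarrow> norm (a - p) \<le> norm (a - m)"
    and "m \<in> N"
  shows "inner (a - p) m = 0"
proof (rule coeff_eq_0_if_quadratic_nonneg)
  fix t :: real
  have "p + t *\<^sub>R m \<in> N" using assms by (simp add: subspace_add subspace_scale)
  hence "norm (a - p)^2 \<le> norm (a - (p + t *\<^sub>R m))^2" using nearest by (simp add: power_mono)
  also have "\<dots> = norm (a - p)^2 + norm m ^ 2 * t^2 - 2 * inner (a - p) m * t"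
    unfolding power2_norm_eq_inner
    by (simp add: inner_simps algebra_simps power2_eq_square inner_commute)
  finally show "0 \<le> norm m ^ 2 * t^2 - 2 * inner (a - p) m * t" by simp
qed simp

lemma closed_subspace_orthogonal_decomposition:
  fixes a :: "'a::{real_inner,complete_space}"
  assumes "closed N" "subspace N"
  obtains p where "p \<in> N" "\<And>m. m \<in> N \<Longrightarrow> inner (a - p) m = 0"
proof -
  have "convex N" "N \<noteq> {}" using \<open>subspace N\<close> subspace_0 by (auto simp: subspace_imp_convex)
  then obtain p where "p \<in> N" "\<And>m. m \<in> N \<Longrightarrow> norm (a - p) \<le> norm (a - m)"
    using closed_convex_nearest_point \<open>closed N\<close> by blast
  thus ?thesis using that nearest_point_subspace_orthogonal \<open>subspace N\<close> by blast
qed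

lemma orthogonal_comp_orthogonal_comp_closed:
  fixes K :: "'a::{real_inner,complete_space} set"
  assumes "closed K" "subspace K"
  shows "orthogonal_comp (orthogonal_comp K) = K"
proof
  show "orthogonal_comp (orthogonal_comp K) \<subseteq> K"
  proof
    fix y assume y: "y \<in> orthogonal_comp (orthogonal_comp K)"
    obtain p where "p \<in> K" and p: "\<And>m. m \<in> K \<Longrightarrow> inner (y - p) m = 0"
      using closed_subspace_orthogonal_decomposition assms by blast
    have "y - p \<in> orthogonal_comp K"
      using p by (simp add: orthogonal_comp_def orthogonal_def inner_commute)
    hence "inner (y - p) y = 0" using y by (simp add: orthogonal_comp_def orthogonal_def)
    hence "inner (y - p) (y - p) = 0" using p[OF \<open>p \<in> K\<close>] by (simp add: inner_diff_right)
    thus "y \<in> K" using \<open>p \<in> K\<close> by simp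
  qed
qed (rule orthogonal_comp_subset)

lemma riesz_representation:
  fixes f :: "'a::{real_inner,complete_space} \<Rightarrow> real"
  assumes "bounded_linear f"
  obtains z where "\<And>x. f x = inner x z"
proof (cases "\<forall>x. f x = 0")
  case True thus ?thesis using that[of 0] by simp
next
  case False
  then obtain a where "f a \<noteq> 0" by blast
  interpret f: bounded_linear f by fact
  define N where "N = {x. f x = 0}"
  have "closed N" unfolding N_def
    by (intro closed_Collect_eq continuous_on_const f.continuous_on continuous_on_id)
  moreover have "subspace N" unfolding N_def by (rule linear_subspace_kernel) (rule f.linear)
  ultimately obtain p where "p \<in> N" and p: "\<And>m. m \<in> N \<Longrightarrow> inner (a - p) m = 0"
    using closed_subspace_orthogonal_decomposition by blast
  define u where "u = a - p"
  have fu: "f u = f a" using \<open>p \<in> N\<close> by (simp add: u_def N_def f.diff)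
  hence "inner u u > 0" using \<open>f a \<noteq> 0\<close> by auto
  have "f x = inner x ((f u / inner u u) *\<^sub>R u)" for x
  proof -
    have "x - (f x / f u) *\<^sub>R u \<in> N" using fu \<open>f a \<noteq> 0\<close> by (simp add: N_def f.diff f.scale)
    hence "inner u (x - (f x / f u) *\<^sub>R u) = 0" using p by (simp add: u_def)
    hence "inner u x = (f x / f u) * inner u u" by (simp add: inner_diff_right)
    thus ?thesis using fu \<open>f a \<noteq> 0\<close> \<open>inner u u > 0\<close> by (simp add: inner_commute field_simps)
  qed
  thus ?thesis by (rule that)
qed

lemma adjoint_on_eqI:
  assumes "subspace M" "z \<in> M" and z: "\<And>x. x \<in> M \<Longrightarrow> inner (T x) y = inner x z"
  shows "adjoint_on M T y = z"
  unfolding adjoint_on_def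
proof (rule the_equality)
  show "z \<in> M \<and> (\<forall>x\<in>M. inner (T x) y = inner x z)" using assms by blast
next
  fix z' assume z': "z' \<in> M \<and> (\<forall>x\<in>M. inner (T x) y = inner x z')"
  hence "z' - z \<in> M" using assms by (simp add: subspace_diff)
  hence "inner (z' - z) (z' - z) = 0" using z z' by (simp add: inner_diff_right)
  thus "z' = z" by simp
qed

lemma inner_adjoint:
  fixes T :: "'a::{real_inner,complete_space} \<Rightarrow> 'b::real_inner"
  assumes "bounded_linear T"
  shows "inner (T x) y = inner x (adjoint T y)"
proof -
  obtain z where z: "\<And>x. inner (T x) y = inner x z"
    using riesz_representation bounded_linear_compose[OF bounded_linear_inner_left assms] by blast
  have "adjoint T y = z" unfolding adjoint_def by (rule adjoint_on_eqI) (auto simp: z)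
  thus ?thesis using z by simp
qed

lemma inner_adjoint_left:
  fixes T :: "'a::{real_inner,complete_space} \<Rightarrow> 'b::real_inner"
  assumes "bounded_linear T"
  shows "inner (adjoint T y) x = inner y (T x)"
  using inner_adjoint[OF assms, of x y] by (simp add: inner_commute)

locale orthogonal_projection =
  fixes M :: "'a::{real_inner,complete_space} set" and P :: "'a \<Rightarrow> 'a"
  assumes subspace: "subspace M" and proj: "orth_proj M P"
begin

lemma in_range: "P x \<in> M"
  using proj by (simp add: orth_proj_def)

lemma inner_residual: "m \<in> M \<Longrightarrow> inner (x - P x) m = 0"
  using proj by (simp add: orth_proj_def)

lemma inner_left: "m \<in> M \<Longrightarrow> inner (P x) m = inner x m"
  using inner_residual[of m x] by (simp add: inner_diff_left)

lemma inner_right: "m \<in> M \<Longrightarrow> inner m (P x) = inner m x"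
  using inner_left[of m x] by (simp only: inner_commute)

lemma eq_iff_inner_eq: "u \<in> M \<Longrightarrow> w \<in> M \<Longrightarrow> u = w \<longleftrightarrow> (\<forall>m\<in>M. inner u m = inner w m)"
proof (intro iffI ballI)
  assume "u \<in> M" "w \<in> M" "\<forall>m\<in>M. inner u m = inner w m"
  moreover from \<open>u \<in> M\<close> \<open>w \<in> M\<close> have "u - w \<in> M" by (simp add: subspace subspace_diff)
  ultimately have "inner (u - w) (u - w) = 0" by (simp add: inner_diff_left)
  thus "u = w" by simp
qed simp

lemma fixed: "m \<in> M \<Longrightarrow> P m = m"
  using eq_iff_inner_eq[OF in_range] inner_left by blast

lemma idem [simp]: "P (P x) = P x"
  by (simp add: fixed in_range)

lemma inner_eq_inner_proj: "inner (P x) y = inner (P x) (P y)"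
  by (simp add: inner_right in_range)

lemma zero_on_orthogonal_comp:
  assumes "k \<in> orthogonal_comp M"
  shows "P k = 0"
proof -
  have "inner (P k) (P k) = inner (P k) k" by (rule inner_eq_inner_proj[symmetric])
  also have "\<dots> = 0" using assms in_range by (simp add: orthogonal_comp_def orthogonal_def)
  finally show ?thesis by simp
qed

lemma residual_in_orthogonal_comp: "x - P x \<in> orthogonal_comp M"
proof -
  have "inner m (x - P x) = 0" if "m \<in> M" for m
    using inner_residual[OF that, of x] by (simp add: inner_commute)
  thus ?thesis by (simp add: orthogonal_comp_def orthogonal_def)
qed

lemma linear: "linear P"
proof (rule linearI)
  show "P (x + y) = P x + P y" for x y
  proof (subst eq_iff_inner_eq)
    show "P x + P y \<in> M" by (simp add: in_range subspace subspace_add)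
  qed (simp_all add: in_range inner_left inner_add_left)
  show "P (c *\<^sub>R x) = c *\<^sub>R P x" for c x
  proof (subst eq_iff_inner_eq)
    show "c *\<^sub>R P x \<in> M" by (simp add: in_range subspace subspace_scale)
  qed (simp_all add: in_range inner_left)
qed

lemma norm_pythagoras: "norm (P x)^2 + norm (x - P x)^2 = norm x ^ 2"
proof -
  have "inner (x - P x) (P x) = 0" by (rule inner_residual[OF in_range])
  thus ?thesis unfolding power2_norm_eq_inner by (simp add: inner_simps inner_commute)
qed

lemma norm_le: "norm (P x) \<le> norm x"
proof (rule power2_le_imp_le)
  show "norm (P x)^2 \<le> norm x ^ 2"
    using norm_pythagoras[of x] zero_le_power2[of "norm (x - P x)"] by linarith
qed simp

lemma bounded_linear: "bounded_linear P"
  by (rule bounded_linear_intro[where K = 1])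
    (simp_all add: linear_add[OF linear] linear_scale[OF linear] norm_le)

lemma adjoint_on_eq: "bounded_linear T \<Longrightarrow> adjoint_on M T y = P (adjoint T y)"
  by (rule adjoint_on_eqI[OF subspace in_range]) (simp add: inner_adjoint inner_right)

lemma inner_adjoint_on:
  "bounded_linear T \<Longrightarrow> n \<in> M \<Longrightarrow> inner (adjoint_on M T y) n = inner (T n) y"
proof -
  assume "bounded_linear T" "n \<in> M"
  hence "inner (adjoint_on M T y) n = inner n (adjoint T y)"
    by (simp add: adjoint_on_eq inner_left inner_right inner_commute)
  also have "\<dots> = inner (T n) y" using inner_adjoint[OF \<open>bounded_linear T\<close>] by simp
  finally show ?thesis .
qed

lemma op_le_id: "op_le P id"
  unfolding op_le_def
proof
  fix x
  have "inner (P x) x = norm (P x)^2"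
    by (simp only: inner_eq_inner_proj[of x x] power2_norm_eq_inner)
  also have "\<dots> \<le> norm x ^ 2" by (rule power_mono[OF norm_le norm_ge_zero])
  finally show "inner (P x) x \<le> inner (id x) x" by (simp add: power2_norm_eq_inner)
qed

lemma isometric_pair_on_iff:
  assumes "bounded_linear C" "\<And>j. j \<in> {1..d} \<Longrightarrow> bounded_linear (B j)"
    and "\<And>j x. j \<in> {1..d} \<Longrightarrow> x \<in> M \<Longrightarrow> B j x \<in> M"
  shows "isometric_pair_on M C B d \<longleftrightarrow>
    (\<forall>m\<in>M. \<forall>n\<in>M. inner (C m) (C n) + (\<Sum>j=1..d. inner (B j m) (B j n)) = inner m n)"
proof -
  have "adjoint_on M C (C m) + (\<Sum>j=1..d. adjoint_on M (B j) (B j m)) = m \<longleftrightarrow>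
      (\<forall>n\<in>M. inner (C m) (C n) + (\<Sum>j=1..d. inner (B j m) (B j n)) = inner m n)"
    if "m \<in> M" for m
  proof -
    have "adjoint_on M C (C m) + (\<Sum>j=1..d. adjoint_on M (B j) (B j m)) \<in> M"
      by (simp add: assms adjoint_on_eq in_range subspace subspace_add subspace_sum)
    moreover have "inner (adjoint_on M C (C m) + (\<Sum>j=1..d. adjoint_on M (B j) (B j m))) n
        = inner (C m) (C n) + (\<Sum>j=1..d. inner (B j m) (B j n))" if "n \<in> M" for n
    proof -
      have "(\<Sum>j=1..d. inner (adjoint_on M (B j) (B j m)) n) = (\<Sum>j=1..d. inner (B j m) (B j n))"
        using that assms(2) by (intro sum.cong refl) (metis inner_adjoint_on inner_commute)
      moreover have "inner (adjoint_on M C (C m)) n = inner (C m) (C n)"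
        using that assms(1) by (simp add: inner_adjoint_on inner_commute[of "C n"])
      ultimately show ?thesis by (simp add: inner_add_left inner_sum_left)
    qed
    ultimately show ?thesis using \<open>m \<in> M\<close> by (simp add: eq_iff_inner_eq)
  qed
  hence "(\<forall>m\<in>M. adjoint_on M C (C m) + (\<Sum>j=1..d. adjoint_on M (B j) (B j m)) = m) \<longleftrightarrow>
      (\<forall>m\<in>M. \<forall>n\<in>M. inner (C m) (C n) + (\<Sum>j=1..d. inner (B j m) (B j n)) = inner m n)"
    by (rule ball_cong[OF refl])
  moreover have "\<forall>j\<in>{1..d}. \<forall>x\<in>M. B j x \<in> M" using assms(3) by blast
  ultimately show ?thesis unfolding isometric_pair_on_def by argo
qed

end

section \<open>Observability kernel and gramian\<close>

lemma word_pow_append: "word_pow A (v @ w) = word_pow A v \<circ> word_pow A w"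
  by (induction v) auto

lemma bounded_linear_word_pow:
  assumes "\<And>j. j \<in> {1..d} \<Longrightarrow> bounded_linear (A j)" and "v \<in> words d"
  shows "bounded_linear (word_pow A v)"
  using assms(2)
proof (induction v)
  case Nil
  thus ?case by (simp add: id_def bounded_linear_ident)
next
  case (Cons i v)
  hence "i \<in> {1..d}" "v \<in> words d" by (auto simp: words_def)
  thus ?case using Cons.IH assms(1) by (simp add: o_def bounded_linear_compose)
qed

lemma obs_kernel_eq: "obs_kernel C A d = (\<Inter>v\<in>words d. {x. C (word_pow A v x) = 0})"
  by (auto simp: obs_kernel_def obs_op_def fun_eq_iff)

lemma obs_kernel_imp_zero:
  assumes "x \<in> obs_kernel C A d"
  shows "C x = 0"
proof -
  have "[] \<in> words d" by (simp add: words_def)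
  hence "C (word_pow A [] x) = 0" using assms unfolding obs_kernel_eq by blast
  thus ?thesis by simp
qed

lemma obs_kernel_invariant:
  assumes "j \<in> {1..d}" "x \<in> obs_kernel C A d"
  shows "A j x \<in> obs_kernel C A d"
proof -
  have "C (word_pow A v (A j x)) = 0" if "v \<in> words d" for v
  proof -
    have "v @ [j] \<in> words d" using that assms(1) by (simp add: words_def)
    hence "C (word_pow A (v @ [j]) x) = 0" using assms(2) by (simp add: obs_kernel_eq)
    thus ?thesis by (simp add: word_pow_append)
  qed
  thus ?thesis by (simp add: obs_kernel_eq)
qed

lemma closed_subspace_obs_kernel:
  assumes "bounded_linear C" "\<And>j. j \<in> {1..d} \<Longrightarrow> bounded_linear (A j)"
  shows "closed (obs_kernel C A d)" "subspace (obs_kernel C A d)"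
proof -
  have bl: "bounded_linear (\<lambda>x. C (word_pow A v x))" if "v \<in> words d" for v
    using bounded_linear_compose[OF assms(1) bounded_linear_word_pow[OF assms(2) that]] .
  show "closed (obs_kernel C A d)" unfolding obs_kernel_eq
    using bl by (intro closed_INT ballI closed_Collect_eq continuous_on_const
        bounded_linear.continuous_on[OF _ continuous_on_id]) auto
  have "subspace {x. C (word_pow A v x) = 0}" if "v \<in> words d" for v
    using linear_subspace_kernel[OF bounded_linear.linear[OF bl[OF that]]] .
  thus "subspace (obs_kernel C A d)" unfolding obs_kernel_eq by (intro subspace_Inter) auto
qed

lemma words_shorter_Suc:
  "{v \<in> words d. length v < Suc N}
     = insert [] ((\<lambda>(j, u). u @ [j]) ` ({1..d} \<times> {v \<in> words d. length v < N}))"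
proof (intro set_eqI iffI)
  fix v assume "v \<in> {v \<in> words d. length v < Suc N}"
  thus "v \<in> insert [] ((\<lambda>(j, u). u @ [j]) ` ({1..d} \<times> {v \<in> words d. length v < N}))"
    by (cases v rule: rev_exhaust) (auto simp: words_def image_iff)
qed (auto simp: words_def)

lemma finite_words_shorter: "finite {v \<in> words d. length v < N}"
  by (rule finite_subset[OF _ finite_lists_length_le[of "{1..d}" N]]) (auto simp: words_def)

text \<open>Peeling off the innermost letter of a word turns the one-step bound into an induction
  on word length.\<close>

lemma observability_sum_le:
  fixes C :: "'a \<Rightarrow> 'b::real_normed_vector"
  assumes nonneg: "\<And>x. 0 \<le> q x"
    and step: "\<And>x. norm (C x)^2 + (\<Sum>j=1..d. q (A j x)) \<le> q x"
    and "finite F" "F \<subseteq> words d"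
  shows "(\<Sum>v\<in>F. norm (C (word_pow A v x))^2) \<le> q x"
proof -
  have short: "(\<Sum>v\<in>{v \<in> words d. length v < N}. norm (C (word_pow A v x))^2) \<le> q x" for N x
  proof (induction N arbitrary: x)
    case 0
    show ?case by (simp add: nonneg)
  next
    case (Suc N)
    let ?W = "{v \<in> words d. length v < N}"
    let ?append = "\<lambda>(j, u). u @ [j]"
    have inj: "inj_on ?append ({1..d} \<times> ?W)" by (auto simp: inj_on_def)
    have "[] \<notin> ?append ` ({1..d} \<times> ?W)" by auto
    moreover have "finite (?append ` ({1..d} \<times> ?W))" by (simp add: finite_words_shorter)
    ultimately have "(\<Sum>v\<in>{v \<in> words d. length v < Suc N}. norm (C (word_pow A v x))^2)
        = norm (C x)^2 + (\<Sum>v\<in>?append ` ({1..d} \<times> ?W). norm (C (word_pow A v x))^2)"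
      unfolding words_shorter_Suc by simp
    also have "(\<Sum>v\<in>?append ` ({1..d} \<times> ?W). norm (C (word_pow A v x))^2)
        = (\<Sum>(j, u)\<in>{1..d} \<times> ?W. norm (C (word_pow A u (A j x)))^2)"
      by (subst sum.reindex[OF inj]) (simp add: word_pow_append case_prod_beta)
    also have "\<dots> = (\<Sum>j=1..d. \<Sum>u\<in>?W. norm (C (word_pow A u (A j x)))^2)"
      by (rule sum.cartesian_product[symmetric])
    also have "\<dots> \<le> (\<Sum>j=1..d. q (A j x))"
      by (intro sum_mono Suc.IH)
    finally show ?case using step[of x] by linarith
  qed
  have "finite (length ` F)" using \<open>finite F\<close> by simp
  then obtain N where "\<forall>n\<in>length ` F. n < N" using finite_nat_set_iff_bounded by blast
  hence "F \<subseteq> {v \<in> words d. length v < N}" using \<open>F \<subseteq> words d\<close> by auto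
  hence "(\<Sum>v\<in>F. norm (C (word_pow A v x))^2)
      \<le> (\<Sum>v\<in>{v \<in> words d. length v < N}. norm (C (word_pow A v x))^2)"
    by (rule sum_mono2[OF finite_words_shorter]) simp
  also have "\<dots> \<le> q x" by (rule short)
  finally show ?thesis .
qed

lemma inner_gramian_le:
  fixes C :: "'a::{real_inner,complete_space} \<Rightarrow> 'b::{real_inner,complete_space}"
  assumes "bounded_linear C" "\<And>j. j \<in> {1..d} \<Longrightarrow> bounded_linear (A j)"
    and bound: "\<And>F. finite F \<Longrightarrow> F \<subseteq> words d \<Longrightarrow> (\<Sum>v\<in>F. norm (C (word_pow A v x))^2) \<le> b"
  shows "inner (gramian C A d x) x \<le> b"
proof -
  define f where "f v = adjoint (word_pow A v) (adjoint C (C (word_pow A v x)))" for v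
  define g where "g v = norm (C (word_pow A v x))^2" for v
  have fg: "inner (f v) x = g v" if "v \<in> words d" for v
    using bounded_linear_word_pow[OF assms(2) that] assms(1)
    by (simp add: f_def g_def inner_adjoint inner_commute power2_norm_eq_inner)
  show ?thesis
  proof (cases "f summable_on words d")
    case True
    hence "(f has_sum gramian C A d x) (words d)"
      unfolding gramian_def f_def[symmetric] by (rule has_sum_infsum)
    from has_sum_bounded_linear[OF bounded_linear_inner_left[of x] this]
    have "(g has_sum inner (gramian C A d x) x) (words d)"
      using has_sum_cong[of "words d" "\<lambda>v. inner (f v) x" g] fg by simp
    hence "inner (gramian C A d x) x = infsum g (words d)" "g summable_on words d"
      by (auto simp: infsumI summable_on_def)
    thus ?thesis using bound by (simp add: infsum_le_finite_sums g_def)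
  next
    case False
    hence "gramian C A d x = 0" unfolding gramian_def f_def[symmetric] by (rule infsum_not_exists)
    thus ?thesis using bound[of "{}"] by simp
  qed
qed

section \<open>The Stein equation on the orthogonal complement of the observability kernel\<close>

lemma contractive_pair_norm_le:
  assumes "contractive_pair C A d"
  shows "norm (C x)^2 + (\<Sum>j=1..d. norm (A j x)^2) \<le> norm x ^ 2"
proof -
  have "bounded_linear C" "\<And>j. j \<in> {1..d} \<Longrightarrow> bounded_linear (A j)"
    using assms by (simp_all add: contractive_pair_def)
  hence "inner (adjoint C (C x) + (\<Sum>j=1..d. adjoint (A j) (A j x))) x
      = norm (C x)^2 + (\<Sum>j=1..d. norm (A j x)^2)"
    by (simp add: inner_add_left inner_sum_left inner_adjoint_left power2_norm_eq_inner)
  moreover have "inner (adjoint C (C x) + (\<Sum>j=1..d. adjoint (A j) (A j x))) x \<le> inner x x"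
    using assms by (simp add: contractive_pair_def op_le_def)
  ultimately show ?thesis by (simp add: power2_norm_eq_inner)
qed

locale contractive_obs_projection =
  fixes C :: "'a::{real_inner,complete_space} \<Rightarrow> 'b::{real_inner,complete_space}"
    and A :: "nat \<Rightarrow> 'a \<Rightarrow> 'a" and d :: nat and Q :: "'a \<Rightarrow> 'a"
  assumes contractive: "contractive_pair C A d"
    and proj_kernel_perp: "orth_proj (orthogonal_comp (obs_kernel C A d)) Q"
begin

abbreviation "K \<equiv> obs_kernel C A d"
abbreviation "M \<equiv> orthogonal_comp K"

lemma bounded_linear_C: "bounded_linear C"
  using contractive by (simp add: contractive_pair_def)

lemma bounded_linear_A: "j \<in> {1..d} \<Longrightarrow> bounded_linear (A j)"
  using contractive by (simp add: contractive_pair_def)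

sublocale Q: orthogonal_projection M Q
  by unfold_locales (rule subspace_orthogonal_comp, rule proj_kernel_perp)

lemma residual_in_kernel: "x - Q x \<in> K"
  using Q.residual_in_orthogonal_comp closed_subspace_obs_kernel[OF bounded_linear_C bounded_linear_A]
  by (simp add: orthogonal_comp_orthogonal_comp_closed)

lemma C_proj: "C (Q x) = C x"
proof -
  have "C x - C (Q x) = C (x - Q x)"
    by (simp add: linear_diff[OF bounded_linear.linear[OF bounded_linear_C]])
  also have "\<dots> = 0" by (rule obs_kernel_imp_zero[OF residual_in_kernel])
  finally show ?thesis by simp
qed

lemma proj_A_proj:
  assumes "j \<in> {1..d}"
  shows "Q (A j (Q x)) = Q (A j x)"
proof -
  have "A j (x - Q x) \<in> orthogonal_comp M"
    using obs_kernel_invariant[OF assms residual_in_kernel] orthogonal_comp_subset by blast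
  hence "Q (A j (x - Q x)) = 0" by (rule Q.zero_on_orthogonal_comp)
  thus ?thesis
    by (simp add: linear_diff[OF bounded_linear.linear[OF bounded_linear_A[OF assms]]]
        linear_diff[OF Q.linear])
qed

lemma stein_norm_le: "norm (C x)^2 + (\<Sum>j=1..d. norm (Q (A j x))^2) \<le> norm (Q x)^2"
proof -
  have "norm (C x)^2 + (\<Sum>j=1..d. norm (Q (A j x))^2)
      = norm (C (Q x))^2 + (\<Sum>j=1..d. norm (Q (A j (Q x)))^2)"
    by (simp add: C_proj proj_A_proj)
  also have "\<dots> \<le> norm (C (Q x))^2 + (\<Sum>j=1..d. norm (A j (Q x))^2)"
    by (intro add_left_mono sum_mono power_mono Q.norm_le norm_ge_zero)
  also have "\<dots> \<le> norm (Q x)^2" by (rule contractive_pair_norm_le[OF contractive])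
  finally show ?thesis .
qed

definition stein_form :: "'a \<Rightarrow> 'a \<Rightarrow> real" where
  "stein_form x y = inner (Q x) (Q y) - (\<Sum>j=1..d. inner (Q (A j x)) (Q (A j y))) - inner (C x) (C y)"

lemma inner_stein_defect:
  "inner (Q x - (\<Sum>j=1..d. adjoint (A j) (Q (A j x))) - adjoint C (C x)) y = stein_form x y"
proof -
  have "inner (adjoint (A j) (Q (A j x))) y = inner (Q (A j x)) (Q (A j y))" if "j \<in> {1..d}" for j
    using inner_adjoint_left[OF bounded_linear_A[OF that]] Q.inner_eq_inner_proj by metis
  hence "(\<Sum>j=1..d. inner (adjoint (A j) (Q (A j x))) y) = (\<Sum>j=1..d. inner (Q (A j x)) (Q (A j y)))"
    by (rule sum.cong[OF refl])
  moreover have "inner (Q x) y = inner (Q x) (Q y)" by (rule Q.inner_eq_inner_proj)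
  ultimately show ?thesis
    by (simp add: stein_form_def inner_diff_left inner_sum_left inner_adjoint_left[OF bounded_linear_C])
qed

lemma stein_form_proj: "stein_form (Q x) (Q y) = stein_form x y"
proof -
  have "(\<Sum>j=1..d. inner (Q (A j (Q x))) (Q (A j (Q y)))) = (\<Sum>j=1..d. inner (Q (A j x)) (Q (A j y)))"
    by (rule sum.cong) (simp_all add: proj_A_proj)
  thus ?thesis by (simp add: stein_form_def C_proj)
qed

lemma stein_eq_iff_stein_form_zero:
  "(\<lambda>x. Q x - (\<Sum>j=1..d. adjoint (A j) (Q (A j x)))) = (\<lambda>x. adjoint C (C x))
    \<longleftrightarrow> (\<forall>m\<in>M. \<forall>n\<in>M. stein_form m n = 0)"
proof
  assume eq: "(\<lambda>x. Q x - (\<Sum>j=1..d. adjoint (A j) (Q (A j x)))) = (\<lambda>x. adjoint C (C x))"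
  have "stein_form x y = 0" for x y
    using inner_stein_defect[of x y] fun_cong[OF eq, of x] by simp
  thus "\<forall>m\<in>M. \<forall>n\<in>M. stein_form m n = 0" by blast
next
  assume zero: "\<forall>m\<in>M. \<forall>n\<in>M. stein_form m n = 0"
  show "(\<lambda>x. Q x - (\<Sum>j=1..d. adjoint (A j) (Q (A j x)))) = (\<lambda>x. adjoint C (C x))"
  proof
    fix x
    define r where "r = Q x - (\<Sum>j=1..d. adjoint (A j) (Q (A j x))) - adjoint C (C x)"
    have "inner r r = stein_form x r" unfolding r_def by (rule inner_stein_defect)
    also have "\<dots> = stein_form (Q x) (Q r)" by (rule stein_form_proj[symmetric])
    also have "\<dots> = 0" using zero by (simp add: Q.in_range)
    finally show "Q x - (\<Sum>j=1..d. adjoint (A j) (Q (A j x))) = adjoint C (C x)" by (simp add: r_def)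
  qed
qed

lemma stein_eq_iff_isometric:
  "(\<lambda>x. Q x - (\<Sum>j=1..d. adjoint (A j) (Q (A j x)))) = (\<lambda>x. adjoint C (C x))
    \<longleftrightarrow> isometric_pair_on M C (\<lambda>j x. Q (A j x)) d"
proof -
  have "bounded_linear (\<lambda>x. Q (A j x))" if "j \<in> {1..d}" for j
    using bounded_linear_compose[OF Q.bounded_linear bounded_linear_A[OF that]] .
  hence "isometric_pair_on M C (\<lambda>j x. Q (A j x)) d \<longleftrightarrow>
      (\<forall>m\<in>M. \<forall>n\<in>M. inner (C m) (C n) + (\<Sum>j=1..d. inner (Q (A j m)) (Q (A j n))) = inner m n)"
    by (intro Q.isometric_pair_on_iff bounded_linear_C Q.in_range)
  also have "\<dots> \<longleftrightarrow> (\<forall>m\<in>M. \<forall>n\<in>M. stein_form m n = 0)"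
    by (auto simp: stein_form_def Q.fixed algebra_simps)
  finally show ?thesis by (simp only: stein_eq_iff_stein_form_zero)
qed

lemma stein_eq_imp_invariant:
  assumes "(\<lambda>x. Q x - (\<Sum>j=1..d. adjoint (A j) (Q (A j x)))) = (\<lambda>x. adjoint C (C x))"
    and "j \<in> {1..d}" "m \<in> M"
  shows "A j m - Q (A j m) = 0"
proof -
  have "stein_form m m = 0" using assms(1,3) stein_eq_iff_stein_form_zero by blast
  hence "norm (C m)^2 + (\<Sum>j=1..d. norm (Q (A j m))^2) = norm m ^ 2"
    using Q.fixed[OF \<open>m \<in> M\<close>] by (simp add: stein_form_def power2_norm_eq_inner)
  moreover have "norm (A j m)^2 = norm (Q (A j m))^2 + norm (A j m - Q (A j m))^2" for j
    using Q.norm_pythagoras by simp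
  ultimately have "(\<Sum>j=1..d. norm (A j m - Q (A j m))^2) \<le> 0"
    using contractive_pair_norm_le[OF contractive, of m] by (simp add: sum.distrib)
  hence "(\<Sum>j=1..d. norm (A j m - Q (A j m))^2) = 0"
    by (intro antisym sum_nonneg zero_le_power2)
  hence "norm (A j m - Q (A j m))^2 = 0" using assms(2) by (simp add: sum_nonneg_eq_0_iff)
  thus ?thesis by simp
qed

lemma stein_inequality:
  "op_le (\<lambda>x. adjoint C (C x)) (\<lambda>x. Q x - (\<Sum>j=1..d. adjoint (A j) (Q (A j x))))"
  unfolding op_le_def
proof
  fix x
  have "0 \<le> stein_form x x"
    using stein_norm_le[of x] by (simp add: stein_form_def power2_norm_eq_inner)
  thus "inner (adjoint C (C x)) x \<le> inner (Q x - (\<Sum>j=1..d. adjoint (A j) (Q (A j x)))) x"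
    by (simp flip: inner_stein_defect add: inner_diff_left)
qed

lemma gramian_le_proj: "op_le (gramian C A d) Q"
  unfolding op_le_def
proof
  fix x
  have "inner (gramian C A d x) x \<le> norm (Q x)^2"
    using bounded_linear_C bounded_linear_A
  proof (rule inner_gramian_le)
    fix F assume "finite F" "F \<subseteq> words d"
    with stein_norm_le show "(\<Sum>v\<in>F. norm (C (word_pow A v x))^2) \<le> norm (Q x)^2"
      by (intro observability_sum_le[where q = "\<lambda>x. norm (Q x)^2"]) auto
  qed
  thus "inner (gramian C A d x) x \<le> inner (Q x) x"
    by (simp only: Q.inner_eq_inner_proj[of x x] power2_norm_eq_inner)
qed

end

theorem proposition2p12:
  fixes C :: "'a::{real_inner,complete_space} \<Rightarrow> 'b::{real_inner,complete_space}"
    and A :: "nat \<Rightarrow> 'a \<Rightarrow> 'a" and d :: nat and Q :: "'a \<Rightarrow> 'a"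
  assumes contr: "contractive_pair C A d"
    and Q: "orth_proj (orthogonal_comp (obs_kernel C A d)) Q"
  shows "(op_le (\<lambda>x. adjoint C (C x)) (\<lambda>x. Q x - (\<Sum>j=1..d. adjoint (A j) (Q (A j x))))) \<and>
    op_le (gramian C A d) Q \<and>
    op_le Q id \<and>
    (\<forall>x\<in>obs_kernel C A d. C x = 0) \<and>
    (\<forall>j\<in>{1..d}. \<forall>x\<in>obs_kernel C A d. A j x \<in> obs_kernel C A d) \<and>
    ((\<lambda>x. Q x - (\<Sum>j=1..d. adjoint (A j) (Q (A j x)))) = (\<lambda>x. adjoint C (C x))
         \<longleftrightarrow> isometric_pair_on (orthogonal_comp (obs_kernel C A d)) C (\<lambda>j x. Q (A j x)) d) \<and>
    ((\<lambda>x. Q x - (\<Sum>j=1..d. adjoint (A j) (Q (A j x)))) = (\<lambda>x. adjoint C (C x))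
         \<longrightarrow> (\<forall>j\<in>{1..d}. \<forall>x\<in>orthogonal_comp (obs_kernel C A d). A j x - Q (A j x) = 0))"
proof -
  interpret contractive_obs_projection C A d Q using contr Q by unfold_locales
  show ?thesis
  proof (intro conjI ballI impI)
    show "op_le (\<lambda>x. adjoint C (C x)) (\<lambda>x. Q x - (\<Sum>j=1..d. adjoint (A j) (Q (A j x))))"
      by (rule stein_inequality)
    show "op_le (gramian C A d) Q" by (rule gramian_le_proj)
    show "op_le Q id" by (rule Q.op_le_id)
    show "C x = 0" if "x \<in> K" for x using that by (rule obs_kernel_imp_zero)
    show "A j x \<in> K" if "j \<in> {1..d}" "x \<in> K" for j x using that by (rule obs_kernel_invariant)
    show "(\<lambda>x. Q x - (\<Sum>j=1..d. adjoint (A j) (Q (A j x)))) = (\<lambda>x. adjoint C (C x))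
        \<longleftrightarrow> isometric_pair_on M C (\<lambda>j x. Q (A j x)) d"
      by (rule stein_eq_iff_isometric)
    show "A j x - Q (A j x) = 0"
      if "(\<lambda>x. Q x - (\<Sum>j=1..d. adjoint (A j) (Q (A j x)))) = (\<lambda>x. adjoint C (C x))"
        and "j \<in> {1..d}" "x \<in> M" for j x
      using that by (rule stein_eq_imp_invariant)
  qed
qed

end
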